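(* For every positive integer $n$: $${}_3F_2\left[\begin{matrix}-n,\ \frac{n+1}2,\ \frac n2\\ \frac13,\ \frac23\end{matrix};1\right]=\frac{1+2(-8)^n}{3\cdot4^n},\qquad {}_3F_2\left[\begin{matrix}-n,\ \frac{n+1}2,\ \frac{n+2}2\\ \frac23,\ \frac43\end{matrix};1\right]=\frac{4(-8)^n-1}{3(3n+1)4^n},$$ $${}_3F_2\left[\begin{matrix}-n,\ \frac{n+3}2,\ \frac{n+2}2\\ \frac43,\ \frac53\end{matrix};1\right]=\frac{2(1-(-8)^{n+1})}{9(n+1)(3n+2)4^n},\qquad {}_3F_2\left[\begin{matrix}-n,\ \frac{n+1}2,\ \frac{n+2}2\\ \frac13,\ \frac23\end{matrix};1\right]=\frac{1+2(9n+4)(-8)^n}{9\cdot4^n},$$ $${}_3F_2\left[\begin{matrix}-n,\ \frac{n+3}2,\ \frac{n+2}2\\ \frac23,\ \frac43\end{matrix};1\right]=\frac{4(9n+7)(-8)^n-1}{27(n+1)4^n},\qquad {}_3F_2\left[\begin{matrix}-n,\ \frac{n+4}2,\ \frac{n+3}2\\ \frac43,\ \frac53\end{matrix};1\right]=\frac{2(1-(9n+10)(-8)^{n+1})}{81(n+1)(n+2)4^n}.$$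
   Context: ${}_3F_2\left[\begin{matrix}a_1,a_2,a_3\\ b_1,b_2\end{matrix};x\right]=\sum_{k\ge0}\frac{(a_1)_k(a_2)_k(a_3)_k}{(b_1)_k(b_2)_k}\frac{x^k}{k!}$, $(x)_k=x(x+1)\cdots(x+k-1)$, $(x)_0=1$; with $a_1=-n$ the series is a finite sum. *)

theory Defs
  imports Complex_Main
begin

text \<open>Terminating hypergeometric series 3F2 with top parameter -n:
  terms with k > n vanish since pochhammer (-n) k = 0 for k > n.\<close>
definition hyp3F2_term :: "nat \<Rightarrow> real \<Rightarrow> real \<Rightarrow> real \<Rightarrow> real \<Rightarrow> real \<Rightarrow> real" where
  "hyp3F2_term n a2 a3 b1 b2 x =
     (\<Sum>k\<le>n. pochhammer (- real n) k * pochhammer a2 k * pochhammer a3 k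
          / (pochhammer b1 k * pochhammer b2 k) * x ^ k / fact k)"

end

theory Submission
  imports Defs
begin

(* With x = n + c the duplication formula merges the upper parameters x/2 and (x+1)/2, so each
   series is S(n) = sum_k F(n,k) with F(n,k) = (-n)_k (x)_(2k) / (4^k (b1)_k (b2)_k k!).
   Let H(n,k) be the same term with top parameter -(n+2) but middle parameter still x.  Each
   F(n+j,k), j <= 2, is a rational multiple of H(n,k), so for suitable polynomials A, B, C in n
   and p in k the creative-telescoping relation
     A F(n,k) + B F(n+1,k) + C F(n+2,k) = p(k+1) H(n,k+1) - p(k) H(n,k)
   is a rational-function identity.  Summing over k gives A S(n) + B S(n+1) + C S(n+2) = 0,
   which the closed forms also satisfy, and they agree with S at n = 1 and n = 2. *)

lemma pochhammer_shift_left: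
  fixes x :: "'a::comm_semiring_1"
  shows "pochhammer (x + 1) m * x = pochhammer x m * (x + of_nat m)"
  by (metis pochhammer_rec pochhammer_rec' mult.commute)

lemma linear_recurrence2_unique:
  fixes f g A B C :: "nat \<Rightarrow> 'a::field"
  assumes lead: "\<And>n. n \<ge> n0 \<Longrightarrow> C n \<noteq> 0"
    and rec_f: "\<And>n. n \<ge> n0 \<Longrightarrow> A n * f n + B n * f (Suc n) + C n * f (Suc (Suc n)) = 0"
    and rec_g: "\<And>n. n \<ge> n0 \<Longrightarrow> A n * g n + B n * g (Suc n) + C n * g (Suc (Suc n)) = 0"
    and init: "f n0 = g n0" "f (Suc n0) = g (Suc n0)"
    and "n \<ge> n0"
  shows "f n = g n"
proof -
  have "f n = g n \<and> f (Suc n) = g (Suc n)"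
    using \<open>n \<ge> n0\<close>
  proof (induction n rule: nat_induct_at_least)
    case base
    show ?case using init ..
  next
    case (Suc n)
    have "C n * f (Suc (Suc n)) = C n * g (Suc (Suc n))"
      using rec_f[OF \<open>n \<ge> n0\<close>] rec_g[OF \<open>n \<ge> n0\<close>] Suc.IH
      by (metis add_left_cancel)
    then show ?case
      using lead[OF \<open>n \<ge> n0\<close>] Suc.IH by simp
  qed
  then show ?thesis ..
qed

definition hg_term :: "real \<Rightarrow> real \<Rightarrow> real \<Rightarrow> real \<Rightarrow> nat \<Rightarrow> real" where
  "hg_term b1 b2 m x k =
     pochhammer (- m) k * pochhammer x (2 * k)
       / (4 ^ k * pochhammer b1 k * pochhammer b2 k * fact k)"

definition hg_sum :: "real \<Rightarrow> real \<Rightarrow> real \<Rightarrow> nat \<Rightarrow> real" where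
  "hg_sum b1 b2 c n = (\<Sum>k\<le>n. hg_term b1 b2 (real n) (real n + c) k)"

lemma hyp3F2_term_commute: "hyp3F2_term n a a' b1 b2 x = hyp3F2_term n a' a b1 b2 x"
  unfolding hyp3F2_term_def by (simp only: mult_ac)

lemma hyp3F2_term_eq_hg_sum:
  "hyp3F2_term n ((real n + c) / 2) ((real n + c + 1) / 2) b1 b2 1 = hg_sum b1 b2 c n"
proof -
  have "pochhammer (real n + c) (2 * k) =
        4 ^ k * pochhammer ((real n + c) / 2) k * pochhammer ((real n + c + 1) / 2) k" for k
    using pochhammer_double[of "(real n + c) / 2" k]
    by (simp add: power_mult add_divide_distrib)
  then show ?thesis
    unfolding hyp3F2_term_def hg_sum_def hg_term_def by (simp add: ac_simps)
qed

lemma hg_term_0 [simp]: "hg_term b1 b2 m x 0 = 1"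
  by (simp add: hg_term_def)

lemma hg_term_eq_0: "n < k \<Longrightarrow> hg_term b1 b2 (real n) x k = 0"
  by (simp add: hg_term_def pochhammer_of_nat_eq_0_lemma)

lemma hg_term_shift_top:
  "hg_term b1 b2 m x k * (m + 1) = hg_term b1 b2 (m + 1) x k * (m + 1 - real k)"
proof -
  have "pochhammer (- m) k * (m + 1) = pochhammer (- (m + 1)) k * (m + 1 - real k)"
    using pochhammer_absorb_comp[of "m + 1" k] by (simp add: mult.commute)
  then show ?thesis
    unfolding hg_term_def by (simp add: ac_simps)
qed

lemma hg_term_shift_middle:
  "hg_term b1 b2 m (x + 1) k * x = hg_term b1 b2 m x k * (x + 2 * real k)"
  using pochhammer_shift_left[of x "2 * k"]
  unfolding hg_term_def by (simp add: ac_simps)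

lemma hg_term_Suc:
  assumes "b1 > 0" "b2 > 0"
  shows "hg_term b1 b2 m x (Suc k) * (4 * (real k + 1) * (b1 + real k) * (b2 + real k))
       = hg_term b1 b2 m x k * ((real k - m) * (x + 2 * real k) * (x + 2 * real k + 1))"
proof -
  have "4 * (real k + 1) * (b1 + real k) * (b2 + real k) \<noteq> 0"
    using assms by (simp add: add_pos_nonneg)
  moreover have num: "pochhammer (- m) (Suc k) * pochhammer x (2 * Suc k) =
      pochhammer (- m) k * pochhammer x (2 * k)
        * ((real k - m) * (x + 2 * real k) * (x + 2 * real k + 1))"
    by (simp add: pochhammer_rec' algebra_simps)
  moreover have den: "4 ^ Suc k * pochhammer b1 (Suc k) * pochhammer b2 (Suc k) * fact (Suc k) =
      4 ^ k * pochhammer b1 k * pochhammer b2 k * fact k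
        * (4 * (real k + 1) * (b1 + real k) * (b2 + real k))"
    by (simp add: pochhammer_rec' algebra_simps)
  ultimately show ?thesis
    unfolding hg_term_def num den by simp
qed

lemma hg_term_shift_top2:
  "hg_term b1 b2 m x k * ((m + 1) * (m + 2))
     = hg_term b1 b2 (m + 2) x k * ((m + 2 - real k) * (m + 1 - real k))"
proof -
  have top1: "hg_term b1 b2 (m + 1) x k * (m + 2) = hg_term b1 b2 (m + 2) x k * (m + 2 - real k)"
    using hg_term_shift_top[of b1 b2 "m + 1" x k] by (simp add: add.assoc)
  have "hg_term b1 b2 m x k * ((m + 1) * (m + 2)) = hg_term b1 b2 m x k * (m + 1) * (m + 2)"
    by (simp only: mult.assoc)
  also have "\<dots> = hg_term b1 b2 (m + 1) x k * (m + 1 - real k) * (m + 2)"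
    by (simp only: hg_term_shift_top)
  also have "\<dots> = hg_term b1 b2 (m + 1) x k * (m + 2) * (m + 1 - real k)"
    by (simp only: mult_ac)
  also have "\<dots> = hg_term b1 b2 (m + 2) x k * ((m + 2 - real k) * (m + 1 - real k))"
    by (simp only: top1 mult.assoc)
  finally show ?thesis .
qed

lemma hg_term_shift_middle2:
  "hg_term b1 b2 m (x + 2) k * (x * (x + 1))
     = hg_term b1 b2 m x k * ((x + 2 * real k) * (x + 2 * real k + 1))"
proof -
  have "hg_term b1 b2 m (x + 2) k * (x * (x + 1))
      = hg_term b1 b2 m (x + 1) k * x * (x + 2 * real k + 1)"
    using hg_term_shift_middle[of b1 b2 m "x + 1" k] by (simp add: mult_ac add_ac)
  also have "\<dots> = hg_term b1 b2 m x k * ((x + 2 * real k) * (x + 2 * real k + 1))"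
    using hg_term_shift_middle[of b1 b2 m x k] by (simp only: mult_ac)
  finally show ?thesis .
qed

lemma hg_term_shift_both:
  "hg_term b1 b2 (m + 1) (x + 1) k * ((m + 2) * x)
     = hg_term b1 b2 (m + 2) x k * ((m + 2 - real k) * (x + 2 * real k))"
proof -
  have top1: "hg_term b1 b2 (m + 1) x k * (m + 2) = hg_term b1 b2 (m + 2) x k * (m + 2 - real k)"
    using hg_term_shift_top[of b1 b2 "m + 1" x k] by (simp add: add.assoc)
  have "hg_term b1 b2 (m + 1) (x + 1) k * ((m + 2) * x)
      = hg_term b1 b2 (m + 1) (x + 1) k * x * (m + 2)"
    by (simp only: mult_ac)
  also have "\<dots> = hg_term b1 b2 (m + 1) x k * (x + 2 * real k) * (m + 2)"
    by (simp only: hg_term_shift_middle)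
  also have "\<dots> = hg_term b1 b2 (m + 1) x k * (m + 2) * (x + 2 * real k)"
    by (simp only: mult_ac)
  also have "\<dots> = hg_term b1 b2 (m + 2) x k * ((m + 2 - real k) * (x + 2 * real k))"
    by (simp only: top1 mult.assoc)
  finally show ?thesis .
qed

text \<open>The three fractions on the left are the terms at \<open>(m, x)\<close>, \<open>(m + 1, x + 1)\<close> and
  \<open>(m + 2, x + 2)\<close> divided by the term at \<open>(m + 2, x)\<close>; the fraction on the right is the
  ratio of consecutive terms at \<open>(m + 2, x)\<close>.\<close>
definition telescoping_certificate ::
    "real \<Rightarrow> real \<Rightarrow> real \<Rightarrow> real \<Rightarrow> real \<Rightarrow> real \<Rightarrow> real \<Rightarrow> (real \<Rightarrow> real) \<Rightarrow> bool"
  where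
  "telescoping_certificate b1 b2 m x A B C p \<longleftrightarrow>
     (\<forall>K\<in>\<nat>. A * ((m + 2 - K) * (m + 1 - K)) / ((m + 1) * (m + 2))
             + B * ((m + 2 - K) * (x + 2 * K)) / ((m + 2) * x)
             + C * ((x + 2 * K) * (x + 2 * K + 1)) / (x * (x + 1))
           = (K - m - 2) * (x + 2 * K) * (x + 2 * K + 1) / (4 * (K + 1) * (b1 + K) * (b2 + K))
               * p (K + 1) - p K)"

lemma hg_term_telescoping:
  assumes b: "b1 > 0" "b2 > 0"
    and nz: "m + 1 \<noteq> 0" "m + 2 \<noteq> 0" "x \<noteq> 0" "x + 1 \<noteq> 0"
    and cert: "telescoping_certificate b1 b2 m x A B C p"
  shows "A * hg_term b1 b2 m x k + B * hg_term b1 b2 (m + 1) (x + 1) k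
           + C * hg_term b1 b2 (m + 2) (x + 2) k
         = hg_term b1 b2 (m + 2) x (Suc k) * p (real k + 1) - hg_term b1 b2 (m + 2) x k * p (real k)"
proof -
  define K where "K = real k"
  define H where "H = hg_term b1 b2 (m + 2) x k"
  have F0: "hg_term b1 b2 m x k = H * ((m + 2 - K) * (m + 1 - K)) / ((m + 1) * (m + 2))"
    using nz hg_term_shift_top2 unfolding H_def K_def by (simp add: eq_divide_eq)
  have F1: "hg_term b1 b2 (m + 1) (x + 1) k = H * ((m + 2 - K) * (x + 2 * K)) / ((m + 2) * x)"
    using nz hg_term_shift_both unfolding H_def K_def by (simp add: eq_divide_eq)
  have F2: "hg_term b1 b2 (m + 2) (x + 2) k = H * ((x + 2 * K) * (x + 2 * K + 1)) / (x * (x + 1))"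
    using nz hg_term_shift_middle2 unfolding H_def K_def by (simp add: eq_divide_eq)
  have "4 * (K + 1) * (b1 + K) * (b2 + K) \<noteq> 0"
    using b by (simp add: K_def add_pos_nonneg)
  then have H_Suc: "hg_term b1 b2 (m + 2) x (Suc k) =
      H * ((K - m - 2) * (x + 2 * K) * (x + 2 * K + 1)) / (4 * (K + 1) * (b1 + K) * (b2 + K))"
    using hg_term_Suc[OF b, of "m + 2" x k] by (simp add: H_def K_def eq_divide_eq algebra_simps)
  have "K \<in> \<nat>"
    by (simp add: K_def)
  note cert_K = cert[unfolded telescoping_certificate_def, THEN bspec, OF this]
  have "A * hg_term b1 b2 m x k + B * hg_term b1 b2 (m + 1) (x + 1) k
          + C * hg_term b1 b2 (m + 2) (x + 2) k
      = H * (A * ((m + 2 - K) * (m + 1 - K)) / ((m + 1) * (m + 2))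
             + B * ((m + 2 - K) * (x + 2 * K)) / ((m + 2) * x)
             + C * ((x + 2 * K) * (x + 2 * K + 1)) / (x * (x + 1)))"
    unfolding F0 F1 F2 by (simp add: ring_distribs mult_ac)
  also have "\<dots> = H * ((K - m - 2) * (x + 2 * K) * (x + 2 * K + 1)
                        / (4 * (K + 1) * (b1 + K) * (b2 + K)) * p (K + 1) - p K)"
    by (simp only: cert_K)
  also have "\<dots> = hg_term b1 b2 (m + 2) x (Suc k) * p (real k + 1)
                  - hg_term b1 b2 (m + 2) x k * p (real k)"
    unfolding H_Suc by (simp add: H_def K_def ring_distribs mult_ac)
  finally show ?thesis .
qed

lemma hg_sum_recurrence:
  assumes b: "b1 > 0" "b2 > 0"
    and nz: "real n + c \<noteq> 0" "real n + c + 1 \<noteq> 0"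
    and cert: "telescoping_certificate b1 b2 (real n) (real n + c) A B C p"
    and "p 0 = 0"
  shows "A * hg_sum b1 b2 c n + B * hg_sum b1 b2 c (Suc n) + C * hg_sum b1 b2 c (Suc (Suc n)) = 0"
proof -
  define G where "G k = hg_term b1 b2 (real n + 2) (real n + c) k * p (real k)" for k
  have padded: "hg_sum b1 b2 c (n + j) =
      (\<Sum>k<n + 3. hg_term b1 b2 (real n + real j) (real n + c + real j) k)" if "j \<le> 2" for j
  proof -
    have "hg_sum b1 b2 c (n + j) = (\<Sum>k<n + 3. hg_term b1 b2 (real (n + j)) (real (n + j) + c) k)"
      unfolding hg_sum_def using that
      by (intro sum.mono_neutral_left) (auto intro!: hg_term_eq_0 simp del: of_nat_add)
    then show ?thesis
      by (simp add: ac_simps)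
  qed
  have "A * hg_sum b1 b2 c n + B * hg_sum b1 b2 c (Suc n) + C * hg_sum b1 b2 c (Suc (Suc n)) =
      (\<Sum>k<n + 3. A * hg_term b1 b2 (real n) (real n + c) k
                   + B * hg_term b1 b2 (real n + 1) (real n + c + 1) k
                   + C * hg_term b1 b2 (real n + 2) (real n + c + 2) k)"
    using padded[of 0] padded[of 1] padded[of 2] by (simp add: sum.distrib sum_distrib_left)
  also have "\<dots> = (\<Sum>k<n + 3. G (Suc k) - G k)"
    using hg_term_telescoping[OF b _ _ nz cert] by (simp add: G_def add.assoc add.commute[of 1])
  also have "\<dots> = G (n + 3) - G 0"
    by (rule sum_lessThan_telescope)
  also have "\<dots> = 0"
    using \<open>p 0 = 0\<close> hg_term_eq_0[of "n + 2" "n + 3" b1 b2] by (simp add: G_def add.commute)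
  finally show ?thesis .
qed

lemma hg_sum_1: "hg_sum b1 b2 c 1 = 1 - (c + 1) * (c + 2) / (4 * b1 * b2)"
proof -
  have "hg_term b1 b2 1 (1 + c) 1 = - ((c + 1) * (c + 2) / (4 * b1 * b2))"
    by (simp add: hg_term_def eval_nat_numeral pochhammer_rec' ac_simps)
  then show ?thesis
    by (simp add: hg_sum_def)
qed

lemma hg_sum_2:
  "hg_sum b1 b2 c 2 = 1 - (c + 2) * (c + 3) / (2 * b1 * b2)
     + (c + 2) * (c + 3) * (c + 4) * (c + 5) / (16 * b1 * (b1 + 1) * b2 * (b2 + 1))"
proof -
  have "hg_term b1 b2 2 (2 + c) 1 = - ((c + 2) * (c + 3) / (2 * b1 * b2))"
    by (simp add: hg_term_def eval_nat_numeral pochhammer_rec' ac_simps)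
  moreover have "hg_term b1 b2 2 (2 + c) 2
      = (c + 2) * (c + 3) * (c + 4) * (c + 5) / (16 * b1 * (b1 + 1) * b2 * (b2 + 1))"
    by (simp add: hg_term_def eval_nat_numeral pochhammer_rec' divide_simps ac_simps)
  ultimately show ?thesis
    by (simp add: hg_sum_def eval_nat_numeral ac_simps)
qed

lemma hg_sum_eq_closed_form:
  fixes A B C T :: "nat \<Rightarrow> real" and p :: "real \<Rightarrow> real"
  assumes b: "b1 > 0" "b2 > 0" and "c > -1" and "p 0 = 0"
    and cert: "\<And>n. n \<ge> 1 \<Longrightarrow>
      telescoping_certificate b1 b2 (real n) (real n + c) (A n) (B n) (C n) p"
    and lead: "\<And>n. n \<ge> 1 \<Longrightarrow> C n \<noteq> 0"
    and rec_T: "\<And>n. n \<ge> 1 \<Longrightarrow> A n * T n + B n * T (Suc n) + C n * T (Suc (Suc n)) = 0"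
    and init: "1 - (c + 1) * (c + 2) / (4 * b1 * b2) = T 1"
      "1 - (c + 2) * (c + 3) / (2 * b1 * b2)
         + (c + 2) * (c + 3) * (c + 4) * (c + 5) / (16 * b1 * (b1 + 1) * b2 * (b2 + 1)) = T 2"
    and "n \<ge> 1"
  shows "hg_sum b1 b2 c n = T n"
proof (rule linear_recurrence2_unique[where A = A and B = B and C = C])
  show "A m * hg_sum b1 b2 c m + B m * hg_sum b1 b2 c (Suc m) + C m * hg_sum b1 b2 c (Suc (Suc m)) = 0"
    if "m \<ge> 1" for m
    using that \<open>c > -1\<close> by (intro hg_sum_recurrence[OF b _ _ cert \<open>p 0 = 0\<close>]) auto
qed (use lead rec_T init hg_sum_1 hg_sum_2 \<open>n \<ge> 1\<close> in \<open>simp_all add: numeral_2_eq_2\<close>)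

text \<open>Recurrence coefficients and certificates as produced by Zeilberger's algorithm; in every
  case \<open>p K = 108 * K * (K + b1 - 1) * (K + b2 - 1)\<close>.\<close>

lemma hg_sum_13_23_0:
  "n \<ge> 1 \<Longrightarrow> hg_sum (1/3) (2/3) 0 n = (1 + 2 * (-8) ^ n) / (3 * 4 ^ n)"
  by (rule hg_sum_eq_closed_form[where
        A = "\<lambda>n. 6 * real n * (real n + 1) * (real n + 2)" and
        B = "\<lambda>n. - 21 * real n * (real n + 1) * (real n + 2)" and
        C = "\<lambda>n. - 12 * real n * (real n + 1) * (real n + 2)" and
        p = "\<lambda>K. 12 * K * (3 * K - 1) * (3 * K - 2)"];
      auto simp: telescoping_certificate_def divide_simps elim!: Nats_cases; algebra)

lemma hg_sum_23_43_1:
  "n \<ge> 1 \<Longrightarrow> hg_sum (2/3) (4/3) 1 n = (4 * (-8) ^ n - 1) / (3 * (3 * real n + 1) * 4 ^ n)"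
  by (rule hg_sum_eq_closed_form[where
        A = "\<lambda>n. 2 * (real n + 1) * (real n + 2) * (3 * real n + 1)" and
        B = "\<lambda>n. - 7 * (real n + 1) * (real n + 2) * (3 * real n + 4)" and
        C = "\<lambda>n. - 4 * (real n + 1) * (real n + 2) * (3 * real n + 7)" and
        p = "\<lambda>K. 12 * K * (3 * K - 1) * (3 * K + 1)"];
      auto simp: telescoping_certificate_def divide_simps elim!: Nats_cases; algebra)

lemma hg_sum_43_53_2:
  "n \<ge> 1 \<Longrightarrow> hg_sum (4/3) (5/3) 2 n = 2 * (1 - (-8) ^ (n + 1)) / (9 * (real n + 1) * (3 * real n + 2) * 4 ^ n)"
  by (rule hg_sum_eq_closed_form[where
        A = "\<lambda>n. 2 * (real n + 1) * (real n + 2) * (3 * real n + 2)" and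
        B = "\<lambda>n. - 7 * (real n + 2) * (real n + 2) * (3 * real n + 5)" and
        C = "\<lambda>n. - 4 * (real n + 2) * (real n + 3) * (3 * real n + 8)" and
        p = "\<lambda>K. 12 * K * (3 * K + 1) * (3 * K + 2)"];
      auto simp: telescoping_certificate_def divide_simps elim!: Nats_cases; algebra)

lemma hg_sum_13_23_1:
  "n \<ge> 1 \<Longrightarrow> hg_sum (1/3) (2/3) 1 n = (1 + 2 * (9 * real n + 4) * (-8) ^ n) / (9 * 4 ^ n)"
  by (rule hg_sum_eq_closed_form[where
        A = "\<lambda>n. 2 * (real n + 1) * (real n + 2) * (3 * real n + 7)" and
        B = "\<lambda>n. - (real n + 1) * (real n + 2) * (21 * real n + 52)" and
        C = "\<lambda>n. - 4 * (real n + 1) * (real n + 2) * (3 * real n + 4)" and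
        p = "\<lambda>K. 12 * K * (3 * K - 1) * (3 * K - 2)"];
      auto simp: telescoping_certificate_def divide_simps elim!: Nats_cases; algebra)

lemma hg_sum_23_43_2:
  "n \<ge> 1 \<Longrightarrow> hg_sum (2/3) (4/3) 2 n = (4 * (9 * real n + 7) * (-8) ^ n - 1) / (27 * (real n + 1) * 4 ^ n)"
  by (rule hg_sum_eq_closed_form[where
        A = "\<lambda>n. 2 * (real n + 1) * (real n + 2) * (3 * real n + 8)" and
        B = "\<lambda>n. - (real n + 2) * (real n + 2) * (21 * real n + 59)" and
        C = "\<lambda>n. - 4 * (real n + 2) * (real n + 3) * (3 * real n + 5)" and
        p = "\<lambda>K. 12 * K * (3 * K - 1) * (3 * K + 1)"];
      auto simp: telescoping_certificate_def divide_simps elim!: Nats_cases; algebra)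

lemma hg_sum_43_53_3:
  "n \<ge> 1 \<Longrightarrow> hg_sum (4/3) (5/3) 3 n = 2 * (1 - (9 * real n + 10) * (-8) ^ (n + 1))
       / (81 * (real n + 1) * (real n + 2) * 4 ^ n)"
  by (rule hg_sum_eq_closed_form[where
        A = "\<lambda>n. 6 * (real n + 1) * (real n + 2) * (real n + 3)" and
        B = "\<lambda>n. - 3 * (real n + 2) * (real n + 3) * (7 * real n + 22)" and
        C = "\<lambda>n. - 12 * (real n + 2) * (real n + 3) * (real n + 4)" and
        p = "\<lambda>K. 12 * K * (3 * K + 1) * (3 * K + 2)"];
      auto simp: telescoping_certificate_def divide_simps elim!: Nats_cases; algebra)

theorem proposition5:
  fixes n :: nat
  assumes "n \<ge> 1"
  shows
   "(hyp3F2_term n ((real n + 1) / 2) (real n / 2) (1/3) (2/3) 1 = (1 + 2 * (-8) ^ n) / (3 * 4 ^ n)) \<and>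
    (hyp3F2_term n ((real n + 1) / 2) ((real n + 2) / 2) (2/3) (4/3) 1 = (4 * (-8) ^ n - 1) / (3 * (3 * real n + 1) * 4 ^ n)) \<and>
    (hyp3F2_term n ((real n + 3) / 2) ((real n + 2) / 2) (4/3) (5/3) 1 = 2 * (1 - (-8) ^ (n + 1)) / (9 * (real n + 1) * (3 * real n + 2) * 4 ^ n)) \<and>
    (hyp3F2_term n ((real n + 1) / 2) ((real n + 2) / 2) (1/3) (2/3) 1 = (1 + 2 * (9 * real n + 4) * (-8) ^ n) / (9 * 4 ^ n)) \<and>
    (hyp3F2_term n ((real n + 3) / 2) ((real n + 2) / 2) (2/3) (4/3) 1 = (4 * (9 * real n + 7) * (-8) ^ n - 1) / (27 * (real n + 1) * 4 ^ n)) \<and>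
    (hyp3F2_term n ((real n + 4) / 2) ((real n + 3) / 2) (4/3) (5/3) 1 = 2 * (1 - (9 * real n + 10) * (-8) ^ (n + 1)) / (81 * (real n + 1) * (real n + 2) * 4 ^ n))"
proof -
  have hg: "hyp3F2_term n ((real n + c) / 2) ((real n + c + 1) / 2) b1 b2 1 = hg_sum b1 b2 c n"
           "hyp3F2_term n ((real n + c + 1) / 2) ((real n + c) / 2) b1 b2 1 = hg_sum b1 b2 c n"
    for c b1 b2
    using hyp3F2_term_eq_hg_sum hyp3F2_term_commute by metis+
  show ?thesis
    using hg[of 0] hg[of 1] hg[of 2] hg[of 3]
      hg_sum_13_23_0[OF assms] hg_sum_23_43_1[OF assms] hg_sum_43_53_2[OF assms]
      hg_sum_13_23_1[OF assms] hg_sum_23_43_2[OF assms] hg_sum_43_53_3[OF assms]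
    by (simp add: add.assoc)
qed

end
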